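(* For every integer $n\ge 3$, $|\mathfrak D^1_{2n}(123)|=4$.
   Context: A Dumont permutation of the first kind of length $2n$ is a permutation $\pi\in\mathfrak S_{2n}$ such that for every $i=1,\dots,2n$: if $\pi(i)$ is even then $i<2n$ and $\pi(i)>\pi(i+1)$; if $\pi(i)$ is odd then $i=2n$ or $\pi(i)<\pi(i+1)$. $\mathfrak D^1_{2n}$ denotes the set of these. A permutation $\sigma$ contains a pattern $\tau\in\mathfrak S_k$ if some subsequence $(\sigma(i_1),\dots,\sigma(i_k))$, $i_1<\dots<i_k$, is order-isomorphic to $\tau$; otherwise $\sigma$ avoids $\tau$. $\mathfrak D^1_{2n}(T)$ denotes the set of permutations in $\mathfrak D^1_{2n}$ avoiding every pattern in $T$. *)

theory Defs
  imports "HOL-Combinatorics.Permutations"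
begin

text \<open>Permutations of [m] = {1..m} are functions nat => nat that permute {1..m}
  (identity outside). Patterns tau in S_k are likewise permutations of {1..k}.\<close>

definition dumont1 :: "nat \<Rightarrow> (nat \<Rightarrow> nat) set" where
  "dumont1 n = {\<pi>. \<pi> permutes {1..2*n} \<and>
     (\<forall>i\<in>{1..2*n}.
        (even (\<pi> i) \<longrightarrow> i < 2*n \<and> \<pi> i > \<pi> (Suc i)) \<and>
        (odd (\<pi> i) \<longrightarrow> i = 2*n \<or> \<pi> i < \<pi> (Suc i)))}"

definition contains_pattern :: "nat \<Rightarrow> (nat \<Rightarrow> nat) \<Rightarrow> nat \<Rightarrow> (nat \<Rightarrow> nat) \<Rightarrow> bool" where
  "contains_pattern m \<sigma> k \<tau> \<longleftrightarrow>
     (\<exists>idx. strict_mono_on {1..k} idx \<and> idx ` {1..k} \<subseteq> {1..m} \<and>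
        (\<forall>a\<in>{1..k}. \<forall>b\<in>{1..k}. \<sigma> (idx a) < \<sigma> (idx b) \<longleftrightarrow> \<tau> a < \<tau> b))"

definition avoids_pattern :: "nat \<Rightarrow> (nat \<Rightarrow> nat) \<Rightarrow> nat \<Rightarrow> (nat \<Rightarrow> nat) \<Rightarrow> bool" where
  "avoids_pattern m \<sigma> k \<tau> \<longleftrightarrow> \<not> contains_pattern m \<sigma> k \<tau>"

definition pat123 :: "nat \<Rightarrow> nat" where
  "pat123 = id"

end

theory Submission
  imports Defs "HOL-Combinatorics.Multiset_Permutations"
begin

(* In one-line notation, a 123-avoiding Dumont permutation of length 2n+2 with n >= 3 starts
   with 2n+1, 2n+2, and deleting these two entries leaves one of length 2n; conversely this
   prefix can be put in front of any such permutation of length 2n. So the count is the same for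
   all n >= 3, and for n = 3 it is found by enumeration.
   The odd entry 2n+1 must be followed by a larger entry, i.e. by 2n+2, unless it is the last
   entry, and any entry in front of this pair would complete a 123. It cannot be the last entry:
   then every ascent ending before the last position ends in 2n+2 (otherwise it forms a 123 with
   the last entry), while each of the odd entries 1, 3, 5 starts an ascent, and only two starting
   positions are left for them: the one in front of 2n+2 and the one before the last. *)

fun dumont_list :: "nat list \<Rightarrow> bool" where
  "dumont_list [] \<longleftrightarrow> True"
| "dumont_list [x] \<longleftrightarrow> odd x"
| "dumont_list (x # y # zs) \<longleftrightarrow> (if even x then y < x else x < y) \<and> dumont_list (y # zs)"

lemma dumont_list_iff_nth:
  "dumont_list xs \<longleftrightarrow> (\<forall>j<length xs.
     (even (xs ! j) \<longrightarrow> Suc j < length xs \<and> xs ! Suc j < xs ! j) \<and>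
     (odd (xs ! j) \<longrightarrow> Suc j = length xs \<or> xs ! j < xs ! Suc j))"
  by (induction xs rule: dumont_list.induct) (simp_all add: All_less_Suc2)

lemma dumont_list_odd_ascent:
  assumes "dumont_list xs" "Suc j < length xs" "odd (xs ! j)"
  shows "xs ! j < xs ! Suc j"
proof -
  have "j < length xs"
    using assms(2) by simp
  then have "odd (xs ! j) \<longrightarrow> Suc j = length xs \<or> xs ! j < xs ! Suc j"
    using assms(1) unfolding dumont_list_iff_nth by blast
  then show ?thesis
    using assms(2,3) by simp
qed

lemma dumont_list_ConsD: "dumont_list (x # xs) \<Longrightarrow> dumont_list xs"
  by (cases xs) auto

definition avoids_123 :: "nat list \<Rightarrow> bool" where
  "avoids_123 xs \<longleftrightarrow> (\<forall>k<length xs. \<forall>j<k. \<forall>i<j. \<not> (xs ! i < xs ! j \<and> xs ! j < xs ! k))"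

lemma avoids_123_Cons:
  "avoids_123 (x # xs) \<longleftrightarrow> avoids_123 xs \<and>
     (\<forall>k<length xs. \<forall>j<k. x < xs ! j \<longrightarrow> \<not> xs ! j < xs ! k)"
  by (simp add: avoids_123_def All_less_Suc2) blast

lemma avoids_123D:
  "avoids_123 xs \<Longrightarrow> i < j \<Longrightarrow> j < k \<Longrightarrow> k < length xs \<Longrightarrow> \<not> (xs ! i < xs ! j \<and> xs ! j < xs ! k)"
  unfolding avoids_123_def by blast

lemma avoids_123_ascent_ge_last:
  assumes "avoids_123 xs" "i < j" "Suc j < length xs" "xs ! i < xs ! j"
  shows "last xs \<le> xs ! j"
proof -
  have "\<not> xs ! j < xs ! (length xs - 1)"
    using avoids_123D[of xs i j "length xs - 1"] assms by auto
  moreover have "xs \<noteq> []"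
    using assms(3) by auto
  ultimately show ?thesis
    by (simp add: last_conv_nth)
qed

definition one_line :: "nat \<Rightarrow> (nat \<Rightarrow> nat) \<Rightarrow> nat list" where
  "one_line m \<pi> = map \<pi> [1..<Suc m]"

lemma length_one_line [simp]: "length (one_line m \<pi>) = m"
  by (simp add: one_line_def)

lemma nth_one_line [simp]: "j < m \<Longrightarrow> one_line m \<pi> ! j = \<pi> (Suc j)"
  by (simp add: one_line_def del: upt_Suc)

lemma bij_betw_one_line:
  "bij_betw (one_line m) {\<pi>. \<pi> permutes {1..m}} (permutations_of_set {1..m})"
proof -
  let ?P = "{\<pi>. \<pi> permutes {1..m}}"
  have inj: "inj_on (one_line m) ?P"
  proof (rule inj_onI)
    fix \<pi> \<sigma> assume "\<pi> \<in> ?P" "\<sigma> \<in> ?P" "one_line m \<pi> = one_line m \<sigma>"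
    then have "\<pi> i = \<sigma> i" for i
      by (cases "i \<in> {1..m}")
        (auto simp: one_line_def atLeastLessThanSuc_atLeastAtMost permutes_not_in simp del: upt_Suc)
    then show "\<pi> = \<sigma>"
      by (simp add: fun_eq_iff)
  qed
  have "[1..<Suc m] \<in> permutations_of_set {1..m}"
    by (simp add: permutations_of_set_def atLeastLessThanSuc_atLeastAtMost del: upt_Suc)
  then have "one_line m \<pi> \<in> permutations_of_set {1..m}" if "\<pi> permutes {1..m}" for \<pi>
    unfolding one_line_def using permutations_of_set_image_permutes[OF that] by blast
  then have "one_line m ` ?P \<subseteq> permutations_of_set {1..m}"
    by blast
  moreover have "card (one_line m ` ?P) = card (permutations_of_set {1..m})"
    using card_image[OF inj] card_permutations[of "{1..m}" m] by simp
  ultimately show ?thesis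
    using inj by (simp add: bij_betw_def card_subset_eq)
qed

lemma card_permutes_one_line:
  "card {\<pi>. \<pi> permutes {1..m} \<and> P (one_line m \<pi>)} = card {xs \<in> permutations_of_set {1..m}. P xs}"
proof (rule bij_betw_same_card, rule bij_betw_subset[OF bij_betw_one_line])
  have "one_line m ` {\<pi>. \<pi> permutes {1..m} \<and> P (one_line m \<pi>)} =
      {xs \<in> one_line m ` {\<pi>. \<pi> permutes {1..m}}. P xs}"
    by auto
  then show "one_line m ` {\<pi>. \<pi> permutes {1..m} \<and> P (one_line m \<pi>)} =
      {xs \<in> permutations_of_set {1..m}. P xs}"
    using bij_betw_one_line[of m] by (simp add: bij_betw_def)
qed auto

lemma ball_atLeast1_atMost_iff: "(\<forall>i\<in>{1..m}. P i) \<longleftrightarrow> (\<forall>j<m. P (Suc j))"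
  unfolding image_Suc_lessThan [symmetric] by auto

lemma dumont_list_one_line_iff:
  "dumont_list (one_line m \<pi>) \<longleftrightarrow> (\<forall>i\<in>{1..m}.
     (even (\<pi> i) \<longrightarrow> i < m \<and> \<pi> i > \<pi> (Suc i)) \<and>
     (odd (\<pi> i) \<longrightarrow> i = m \<or> \<pi> i < \<pi> (Suc i)))"
proof -
  have "(even (one_line m \<pi> ! j) \<longrightarrow> Suc j < m \<and> one_line m \<pi> ! Suc j < one_line m \<pi> ! j) \<and>
      (odd (one_line m \<pi> ! j) \<longrightarrow> Suc j = m \<or> one_line m \<pi> ! j < one_line m \<pi> ! Suc j) \<longleftrightarrow>
      (even (\<pi> (Suc j)) \<longrightarrow> Suc j < m \<and> \<pi> (Suc j) > \<pi> (Suc (Suc j))) \<and>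
      (odd (\<pi> (Suc j)) \<longrightarrow> Suc j = m \<or> \<pi> (Suc j) < \<pi> (Suc (Suc j)))" if "j < m" for j
    using that by (cases "Suc j < m") auto
  then show ?thesis
    unfolding dumont_list_iff_nth ball_atLeast1_atMost_iff length_one_line by (simp del: nth_one_line)
qed

lemma contains_pattern_123_iff:
  "contains_pattern m \<pi> 3 pat123 \<longleftrightarrow> \<not> avoids_123 (one_line m \<pi>)"
proof
  assume "contains_pattern m \<pi> 3 pat123"
  then obtain idx :: "nat \<Rightarrow> nat" where idx_mono: "strict_mono_on {1..3} idx"
    and in_range: "idx ` {1..3} \<subseteq> {1..m}"
    and idx_order: "\<forall>a\<in>{1..3}. \<forall>b\<in>{1..3}. \<pi> (idx a) < \<pi> (idx b) \<longleftrightarrow> a < b"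
    unfolding contains_pattern_def pat123_def by auto
  have "idx 1 < idx 2" "idx 2 < idx 3"
    using idx_mono by (auto intro: strict_mono_onD)
  moreover have "1 \<le> idx 1" "idx 3 \<le> m"
    using in_range by (auto simp: image_subset_iff)
  ultimately have "0 < idx 1" "0 < idx 2" "0 < idx 3"
    by auto
  then obtain i j k where idx: "idx 1 = Suc i" "idx 2 = Suc j" "idx 3 = Suc k"
    by (meson gr0_implies_Suc)
  have ijk: "i < j" "j < k" "k < m"
    using idx \<open>idx 1 < idx 2\<close> \<open>idx 2 < idx 3\<close> \<open>idx 3 \<le> m\<close> by auto
  have "\<pi> (idx 1) < \<pi> (idx 2)" "\<pi> (idx 2) < \<pi> (idx 3)"
    using idx_order by auto
  then show "\<not> avoids_123 (one_line m \<pi>)"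
    using avoids_123D[of "one_line m \<pi>" i j k] ijk idx by auto
next
  assume "\<not> avoids_123 (one_line m \<pi>)"
  then obtain i j k where ijk: "i < j" "j < k" "k < m"
    and "one_line m \<pi> ! i < one_line m \<pi> ! j" "one_line m \<pi> ! j < one_line m \<pi> ! k"
    unfolding avoids_123_def by auto
  then have asc: "\<pi> (Suc i) < \<pi> (Suc j)" "\<pi> (Suc j) < \<pi> (Suc k)"
    by auto
  define idx where "idx a = (if a = 1 then Suc i else if a = 2 then Suc j else Suc k)" for a :: nat
  have three: "{1..3::nat} = {1, 2, 3}"
    by auto
  show "contains_pattern m \<pi> 3 pat123"
    unfolding contains_pattern_def
  proof (intro exI conjI)
    show "strict_mono_on {1..3} idx" "idx ` {1..3} \<subseteq> {1..m}"
      using ijk unfolding strict_mono_on_def three idx_def by auto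
    show "\<forall>a\<in>{1..3}. \<forall>b\<in>{1..3}. \<pi> (idx a) < \<pi> (idx b) \<longleftrightarrow> pat123 a < pat123 b"
      using asc unfolding three idx_def pat123_def by auto
  qed
qed

lemma permutations_of_set_nth_mem:
  "xs \<in> permutations_of_set A \<Longrightarrow> t < length xs \<Longrightarrow> xs ! t \<in> A"
  by (auto simp: permutations_of_set_def)

lemma permutations_of_set_nth_eq_iff:
  "xs \<in> permutations_of_set A \<Longrightarrow> t < length xs \<Longrightarrow> t' < length xs \<Longrightarrow> xs ! t = xs ! t' \<longleftrightarrow> t = t'"
  by (simp add: permutations_of_set_def nth_eq_iff_index_eq)

lemma permutations_of_set_ex_nth:
  "xs \<in> permutations_of_set A \<Longrightarrow> v \<in> A \<Longrightarrow> \<exists>t<length xs. xs ! t = v"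
  by (auto simp: permutations_of_set_def in_set_conv_nth)

definition dumont_123_lists :: "nat \<Rightarrow> nat list set" where
  "dumont_123_lists n = {xs \<in> permutations_of_set {1..2 * n}. dumont_list xs \<and> avoids_123 xs}"

lemma card_dumont1_avoiding_123:
  "card {\<pi> \<in> dumont1 n. avoids_pattern (2 * n) \<pi> 3 pat123} = card (dumont_123_lists n)"
proof -
  have "{\<pi> \<in> dumont1 n. avoids_pattern (2 * n) \<pi> 3 pat123} =
      {\<pi>. \<pi> permutes {1..2 * n} \<and> dumont_list (one_line (2 * n) \<pi>) \<and> avoids_123 (one_line (2 * n) \<pi>)}"
    unfolding dumont1_def avoids_pattern_def dumont_list_one_line_iff contains_pattern_123_iff
    by auto
  then show ?thesis
    using card_permutes_one_line[of "2 * n" "\<lambda>xs. dumont_list xs \<and> avoids_123 xs"]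
    unfolding dumont_123_lists_def by simp
qed

lemma dumont_123_listsD:
  assumes "xs \<in> dumont_123_lists n"
  shows "xs \<in> permutations_of_set {1..2 * n}" "length xs = 2 * n" "dumont_list xs" "avoids_123 xs"
  using assms length_finite_permutations_of_set[of xs "{1..2 * n}"]
  by (auto simp: dumont_123_lists_def)

lemma top_pair_Cons_in_dumont_123_lists:
  assumes "n \<ge> 1" "ys \<in> dumont_123_lists n"
  shows "(2 * n + 1) # (2 * n + 2) # ys \<in> dumont_123_lists (Suc n)"
proof -
  note ys = dumont_123_listsD[OF assms(2)]
  have small: "\<not> c < ys ! j" if "2 * n \<le> c" "j < length ys" for c j
    using permutations_of_set_nth_mem[OF ys(1) that(2)] that(1) by auto
  obtain y ys' where "ys = y # ys'"
    using ys(2) assms(1) by (cases ys) auto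
  then have "dumont_list ((2 * n + 1) # (2 * n + 2) # ys)"
    using ys(3) small[of "2 * n" 0] by auto
  moreover have "avoids_123 ((2 * n + 1) # (2 * n + 2) # ys)"
  proof -
    have "avoids_123 ((2 * n + 2) # ys)"
      unfolding avoids_123_Cons using ys(4) by (simp add: small)
    then show ?thesis
      unfolding avoids_123_Cons by (simp add: All_less_Suc2 small)
  qed
  moreover have "(2 * n + 1) # (2 * n + 2) # ys \<in> permutations_of_set {1..2 * Suc n}"
    using ys(1) by (auto simp: permutations_of_set_def)
  ultimately show ?thesis
    unfolding dumont_123_lists_def by blast
qed

lemma dumont_123_list_odd_entry_before_max:
  assumes xs: "xs \<in> dumont_123_lists (Suc n)" and last: "last xs = 2 * n + 1"
    and t: "t < 2 * n" "odd (xs ! t)"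
  shows "xs ! Suc t = 2 * n + 2"
proof -
  note xs = dumont_123_listsD[OF xs]
  have "xs \<noteq> []"
    using xs(2) by auto
  then have at_end: "xs ! (2 * n + 1) = 2 * n + 1"
    using last xs(2) by (simp add: last_conv_nth)
  have "xs ! t < xs ! Suc t"
    using dumont_list_odd_ascent[OF xs(3)] t xs(2) by simp
  then have "2 * n + 1 \<le> xs ! Suc t"
    using avoids_123_ascent_ge_last[OF xs(4), of t "Suc t"] t(1) xs(2) last by simp
  moreover have "xs ! Suc t \<noteq> 2 * n + 1"
    using permutations_of_set_nth_eq_iff[OF xs(1), of "Suc t" "2 * n + 1"] at_end t(1) xs(2)
    by auto
  moreover have "xs ! Suc t \<le> 2 * n + 2"
    using permutations_of_set_nth_mem[OF xs(1), of "Suc t"] t(1) xs(2) by auto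
  ultimately show ?thesis
    by auto
qed

lemma dumont_123_list_last_neq:
  assumes "n \<ge> 3" "xs \<in> dumont_123_lists (Suc n)"
  shows "last xs \<noteq> 2 * n + 1"
proof
  assume last: "last xs = 2 * n + 1"
  note xs = dumont_123_listsD[OF assms(2)]
  have "xs \<noteq> []"
    using xs(2) by auto
  then have at_end: "xs ! (2 * n + 1) = 2 * n + 1"
    using last xs(2) by (simp add: last_conv_nth)
  obtain p where p: "p < length xs" "xs ! p = 2 * n + 2"
    using permutations_of_set_ex_nth[OF xs(1), of "2 * n + 2"] by auto
  have before_max_unless_2n: "Suc t = p \<or> t = 2 * n"
    if "xs ! t \<in> {1, 3, 5}" "t < length xs" for t
  proof (rule disjCI)
    assume "t \<noteq> 2 * n"
    moreover have "t \<noteq> 2 * n + 1"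
      using that(1) at_end assms(1) by auto
    ultimately have "t < 2 * n"
      using that(2) xs(2) by simp
    moreover have "odd (xs ! t)"
      using that(1) by auto
    ultimately have "xs ! Suc t = 2 * n + 2"
      by (rule dumont_123_list_odd_entry_before_max[OF assms(2) last])
    then show "Suc t = p"
      using permutations_of_set_nth_eq_iff[OF xs(1), of "Suc t" p] p \<open>t < 2 * n\<close> xs(2) by auto
  qed
  obtain t1 t3 t5 where "t1 < length xs" "xs ! t1 = 1" "t3 < length xs" "xs ! t3 = 3"
    "t5 < length xs" "xs ! t5 = 5"
    using permutations_of_set_ex_nth[OF xs(1), of 1] permutations_of_set_ex_nth[OF xs(1), of 3]
      permutations_of_set_ex_nth[OF xs(1), of 5] assms(1) by force
  then have "Suc t1 = p \<or> t1 = 2 * n" "Suc t3 = p \<or> t3 = 2 * n" "Suc t5 = p \<or> t5 = 2 * n"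
    and "t1 \<noteq> t3" "t1 \<noteq> t5" "t3 \<noteq> t5"
    using before_max_unless_2n by auto
  then show False
    by (elim disjE) simp_all
qed

lemma dumont_123_list_starts_with_top_pair:
  assumes "n \<ge> 3" "xs \<in> dumont_123_lists (Suc n)"
  shows "\<exists>ys. xs = (2 * n + 1) # (2 * n + 2) # ys"
proof -
  note xs = dumont_123_listsD[OF assms(2)]
  obtain q where q: "q < length xs" "xs ! q = 2 * n + 1"
    using permutations_of_set_ex_nth[OF xs(1), of "2 * n + 1"] by auto
  have "xs \<noteq> []"
    using xs(2) by auto
  then have "q \<noteq> length xs - 1"
    using dumont_123_list_last_neq[OF assms] q(2) by (auto simp: last_conv_nth)
  then have "Suc q < length xs"
    using q(1) by auto
  then have "xs ! q < xs ! Suc q"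
    using dumont_list_odd_ascent[OF xs(3) \<open>Suc q < length xs\<close>] q(2) by simp
  then have next_q: "xs ! Suc q = 2 * n + 2"
    using permutations_of_set_nth_mem[OF xs(1) \<open>Suc q < length xs\<close>] q(2) by auto
  have "q = 0"
  proof (rule ccontr)
    assume "q \<noteq> 0"
    then have "xs ! 0 \<noteq> 2 * n + 1" "xs ! 0 \<noteq> 2 * n + 2"
      using permutations_of_set_nth_eq_iff[OF xs(1), of 0 q]
        permutations_of_set_nth_eq_iff[OF xs(1), of 0 "Suc q"]
        q next_q \<open>Suc q < length xs\<close> \<open>xs \<noteq> []\<close> by auto
    then have "xs ! 0 < xs ! q"
      using permutations_of_set_nth_mem[OF xs(1), of 0] q \<open>xs \<noteq> []\<close> by auto
    then show False
      using avoids_123D[OF xs(4), of 0 q "Suc q"] \<open>q \<noteq> 0\<close> \<open>Suc q < length xs\<close> next_q q(2)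
      by auto
  qed
  moreover obtain a b ys where "xs = a # b # ys"
    using xs(2) by (auto simp: length_Suc_conv)
  ultimately show ?thesis
    using q(2) next_q by auto
qed

lemma dumont_123_lists_Suc:
  assumes "n \<ge> 3"
  shows "dumont_123_lists (Suc n) = (\<lambda>ys. (2 * n + 1) # (2 * n + 2) # ys) ` dumont_123_lists n"
proof
  show "dumont_123_lists (Suc n) \<subseteq> (\<lambda>ys. (2 * n + 1) # (2 * n + 2) # ys) ` dumont_123_lists n"
  proof
    fix xs
    assume xs: "xs \<in> dumont_123_lists (Suc n)"
    then obtain ys where xs_eq: "xs = (2 * n + 1) # (2 * n + 2) # ys"
      using dumont_123_list_starts_with_top_pair[OF assms] by blast
    note xs_props = dumont_123_listsD[OF xs, unfolded xs_eq]
    have "set ys = {1..2 * n + 2} - {2 * n + 1, 2 * n + 2}"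
      using permutations_of_setD[OF xs_props(1)] by auto
    also have "\<dots> = {1..2 * n}"
      by auto
    finally have "ys \<in> permutations_of_set {1..2 * n}"
      using permutations_of_setD(2)[OF xs_props(1)] by (simp add: permutations_of_set_def)
    moreover have "dumont_list ys"
      using xs_props(3) by (auto dest: dumont_list_ConsD)
    moreover have "avoids_123 ys"
      using xs_props(4) by (simp add: avoids_123_Cons)
    ultimately have "ys \<in> dumont_123_lists n"
      by (simp add: dumont_123_lists_def)
    then show "xs \<in> (\<lambda>ys. (2 * n + 1) # (2 * n + 2) # ys) ` dumont_123_lists n"
      using xs_eq by blast
  qed
  show "(\<lambda>ys. (2 * n + 1) # (2 * n + 2) # ys) ` dumont_123_lists n \<subseteq> dumont_123_lists (Suc n)"
    using top_pair_Cons_in_dumont_123_lists assms by auto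
qed

lemma card_dumont_123_lists_3: "card (dumont_123_lists 3) = 4"
  by code_simp

lemma card_dumont_123_lists:
  assumes "n \<ge> 3"
  shows "card (dumont_123_lists n) = 4"
  using assms
proof (induction n rule: nat_induct_at_least)
  case base
  show ?case
    by (fact card_dumont_123_lists_3)
next
  case (Suc n)
  have "inj_on (\<lambda>ys. (2 * n + 1) # (2 * n + 2) # ys) (dumont_123_lists n)"
    by (rule inj_onI) simp
  then show ?case
    unfolding dumont_123_lists_Suc[OF Suc.hyps] using Suc.IH by (simp add: card_image)
qed

theorem theorem2p5:
  fixes n :: nat
  assumes "n \<ge> 3"
  shows "card {\<pi> \<in> dumont1 n. avoids_pattern (2*n) \<pi> 3 pat123} = 4"
  using card_dumont1_avoiding_123 card_dumont_123_lists[OF assms] by simp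

end
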